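(* Let $A\neq0$ be a real $m\times n$ matrix, let $\varepsilon>0$, and let $\beta\in\mathbb R_m$ be such that $\beta^T$ lies in the range of $A$. Then $S(A,\beta)$ is a proper subset of $S(A,\beta,\varepsilon)$.
   Context: $\mathbb R_m$ denotes real row vectors of length $m$, $\mathbb R_m^+$ (resp. $\mathbb R_n^+$) those with all entries strictly positive. For $c\in\mathbb R_m^+$, $\alpha\in\mathbb R_m$, $c^\alpha:=\prod_i c_i^{\alpha_i}$. For a real $m\times n$ matrix $A$ with columns $\alpha_1^T,\dots,\alpha_n^T$, $\beta\in\mathbb R_m$ and $\varepsilon\ge0$, $S(A,\beta,\varepsilon)$ is the set of all $F:\mathbb R_n^+\to\mathbb R$ with $$|F(v_1c^{\alpha_1},\dots,v_nc^{\alpha_n})-F(v_1,\dots,v_n)c^\beta|\le\varepsilon|F(v_1,\dots,v_n)|c^\beta$$ for all $v_1,\dots,v_n>0$ and all $c\in\mathbb R_m^+$; $S(A,\beta):=S(A,\beta,0)$. *)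

theory Defs
  imports "HOL-Analysis.Analysis"
begin

text \<open>Vectors in R_m are modelled as real^'m, an m x n matrix as real^'n^'m
(row index 'm, column index 'n). Column j of A is alpha_j with (alpha_j)_i = A$i$j.\<close>

definition pos_vec :: "real^'k \<Rightarrow> bool" where
  "pos_vec x \<longleftrightarrow> (\<forall>i. x $ i > 0)"

definition vpow :: "real^'m \<Rightarrow> real^'m \<Rightarrow> real" where
  "vpow c \<alpha> = (\<Prod>i\<in>UNIV. (c $ i) powr (\<alpha> $ i))"

definition col :: "real^'n^'m \<Rightarrow> 'n \<Rightarrow> real^'m" where
  "col A j = (\<chi> i. A $ i $ j)"

definition S_eps :: "real^'n^'m \<Rightarrow> real^'m \<Rightarrow> real \<Rightarrow> (real^'n \<Rightarrow> real) set" where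
  "S_eps A \<beta> \<epsilon> = {F. \<forall>v c. pos_vec v \<longrightarrow> pos_vec c \<longrightarrow>
      \<bar>F (\<chi> j. v $ j * vpow c (col A j)) - F v * vpow c \<beta>\<bar> \<le> \<epsilon> * \<bar>F v\<bar> * vpow c \<beta>}"

definition S0 :: "real^'n^'m \<Rightarrow> real^'m \<Rightarrow> (real^'n \<Rightarrow> real) set" where
  "S0 A \<beta> = S_eps A \<beta> 0"

end

theory Submission
  imports Defs
begin

text \<open>Since c acts on v by v_j \<mapsto> v_j c^\<alpha>_j, a monomial v^x with A x = \<beta> transforms
  by the factor c^\<beta>. Multiplying it by a nonnegative h whose relative oscillation is at most
  \<epsilon> therefore gives an element of S(A,\<beta>,\<epsilon>), and an element of S(A,\<beta>) only if h is
  invariant. Take for h the step function that is 1 + \<epsilon> where v_j > 1 and 1 elsewhere, for a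
  column \<alpha>_j \<noteq> 0: some c with c^\<alpha>_j > 1 moves the point (1,...,1) across the step.\<close>

lemma vpow_pos: "pos_vec c \<Longrightarrow> vpow c a > 0"
  unfolding vpow_def pos_vec_def by (intro prod_pos) (metis powr_gt_zero less_irrefl)

lemma vpow_scaled:
  fixes A :: "real^'n^'m" and v :: "real^'n" and c :: "real^'m"
  assumes c: "pos_vec c"
  shows "vpow (\<chi> j. v $ j * vpow c (col A j)) x = vpow v x * vpow c (A *v x)"
proof -
  have c_pos: "c $ i > 0" for i
    using c unfolding pos_vec_def by blast
  have "vpow (\<chi> j. v $ j * vpow c (col A j)) x
      = (\<Prod>j\<in>UNIV. v $ j powr (x $ j) * (\<Prod>i\<in>UNIV. c $ i powr (A $ i $ j * x $ j)))"
    unfolding vpow_def col_def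
    by (simp add: powr_mult prod_powr_distrib powr_powr c_pos)
  also have "\<dots> = vpow v x * (\<Prod>j\<in>UNIV. \<Prod>i\<in>UNIV. c $ i powr (A $ i $ j * x $ j))"
    by (simp add: prod.distrib vpow_def)
  also have "(\<Prod>j\<in>UNIV. \<Prod>i\<in>UNIV. c $ i powr (A $ i $ j * x $ j))
      = (\<Prod>i\<in>UNIV. \<Prod>j\<in>UNIV. c $ i powr (A $ i $ j * x $ j))"
    by (rule prod.swap)
  also have "\<dots> = vpow c (A *v x)"
    unfolding vpow_def matrix_vector_mult_def
    by (simp add: powr_sum c_pos less_imp_neq[symmetric])
  finally show ?thesis .
qed

lemma S_eps_mono:
  assumes "0 \<le> \<delta>" and "\<delta> \<le> \<epsilon>"
  shows "S_eps A \<beta> \<delta> \<subseteq> S_eps A \<beta> \<epsilon>"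
proof -
  have "\<delta> * \<bar>F v\<bar> * vpow c \<beta> \<le> \<epsilon> * \<bar>F v\<bar> * vpow c \<beta>" if "pos_vec c" for F v c
    using assms vpow_pos[OF that, of \<beta>] by (intro mult_right_mono) auto
  then show ?thesis
    unfolding S_eps_def by (force intro: order_trans)
qed

lemma S0_iff:
  "F \<in> S0 A \<beta> \<longleftrightarrow>
     (\<forall>v c. pos_vec v \<longrightarrow> pos_vec c \<longrightarrow> F (\<chi> j. v $ j * vpow c (col A j)) = F v * vpow c \<beta>)"
  unfolding S0_def S_eps_def by simp

lemma monomial_mult_in_S_eps:
  fixes A :: "real^'n^'m"
  assumes "A *v x = \<beta>"
    and h_nonneg: "\<And>v. 0 \<le> h v"
    and h_osc: "\<And>v w. \<bar>h w - h v\<bar> \<le> \<epsilon> * h v"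
  shows "(\<lambda>v. vpow v x * h v) \<in> S_eps A \<beta> \<epsilon>"
  unfolding S_eps_def
proof (intro CollectI allI impI)
  fix v :: "real^'n" and c :: "real^'m"
  assume v: "pos_vec v" and c: "pos_vec c"
  define w where "w = (\<chi> j. v $ j * vpow c (col A j))"
  have pos: "vpow v x > 0" "vpow c \<beta> > 0"
    using vpow_pos v c by auto
  have "vpow w x * h w - vpow v x * h v * vpow c \<beta> = vpow v x * vpow c \<beta> * (h w - h v)"
    using vpow_scaled[OF c, of v A x] assms(1) by (simp add: w_def algebra_simps)
  then have "\<bar>vpow w x * h w - vpow v x * h v * vpow c \<beta>\<bar> = vpow v x * vpow c \<beta> * \<bar>h w - h v\<bar>"
    using pos by (simp add: abs_mult)
  also have "\<dots> \<le> vpow v x * vpow c \<beta> * (\<epsilon> * h v)"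
    using h_osc pos by (intro mult_left_mono) auto
  also have "\<dots> = \<epsilon> * \<bar>vpow v x * h v\<bar> * vpow c \<beta>"
    using pos h_nonneg[of v] by (simp add: abs_mult)
  finally show "\<bar>vpow w x * h w - vpow v x * h v * vpow c \<beta>\<bar> \<le> \<epsilon> * \<bar>vpow v x * h v\<bar> * vpow c \<beta>" .
qed

lemma monomial_mult_notin_S0:
  fixes A :: "real^'n^'m"
  assumes "A *v x = \<beta>" and v: "pos_vec v" and c: "pos_vec c"
    and "h (\<chi> j. v $ j * vpow c (col A j)) \<noteq> h v"
  shows "(\<lambda>v. vpow v x * h v) \<notin> S0 A \<beta>"
proof
  assume "(\<lambda>v. vpow v x * h v) \<in> S0 A \<beta>"
  then have "vpow (\<chi> j. v $ j * vpow c (col A j)) x * h (\<chi> j. v $ j * vpow c (col A j))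
      = vpow v x * h v * vpow c \<beta>"
    using v c unfolding S0_iff by blast
  then have "vpow v x * vpow c \<beta> * h (\<chi> j. v $ j * vpow c (col A j)) = vpow v x * vpow c \<beta> * h v"
    using vpow_scaled[OF c, of v A x] assms(1) by (simp add: algebra_simps)
  then show False
    using assms(4) vpow_pos[OF v, of x] vpow_pos[OF c, of \<beta>] by simp
qed

lemma vpow_gt_one_exists:
  fixes \<alpha> :: "real^'m"
  assumes "\<alpha> \<noteq> 0"
  obtains c where "pos_vec c" and "vpow c \<alpha> > 1"
proof -
  obtain i where i: "\<alpha> $ i \<noteq> 0"
    using assms by (metis vec_eq_iff zero_index)
  define c :: "real^'m" where "c = (\<chi> k. if k = i then 2 powr (\<alpha> $ i) else 1)"
  have "pos_vec c"
    by (simp add: c_def pos_vec_def)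
  moreover have "vpow c \<alpha> = 2 powr (\<alpha> $ i * \<alpha> $ i)"
    unfolding vpow_def
    by (subst prod.remove[of UNIV i]) (auto simp: c_def powr_powr intro!: prod.neutral)
  moreover have "2 powr (\<alpha> $ i * \<alpha> $ i) > (1::real)"
    using i by (intro gr_one_powr) (auto simp: zero_less_mult_iff)
  ultimately show ?thesis
    using that by simp
qed

theorem mainTheorem8:
  fixes A :: "real^'n^'m" and \<beta> :: "real^'m" and \<epsilon> :: real
  assumes "A \<noteq> 0" and "\<epsilon> > 0" and "\<exists>x. A *v x = \<beta>"
  shows "S0 A \<beta> \<subset> S_eps A \<beta> \<epsilon>"
proof -
  obtain x where x: "A *v x = \<beta>"
    using assms(3) by blast
  obtain j where "col A j \<noteq> 0"
    using assms(1) by (metis col_def vec_eq_iff vec_lambda_beta zero_index)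
  then obtain c where c: "pos_vec c" and c_gt: "vpow c (col A j) > 1"
    by (rule vpow_gt_one_exists)
  define h :: "real^'n \<Rightarrow> real" where "h v = (if v $ j > 1 then 1 + \<epsilon> else 1)" for v
  define one :: "real^'n" where "one = (\<chi> k. 1)"
  have one: "pos_vec one" "one $ j = 1"
    by (simp_all add: one_def pos_vec_def)
  have "(\<lambda>v. vpow v x * h v) \<in> S_eps A \<beta> \<epsilon>"
    using x assms(2) by (intro monomial_mult_in_S_eps) (auto simp: h_def)
  moreover have "(\<lambda>v. vpow v x * h v) \<notin> S0 A \<beta>"
  proof (rule monomial_mult_notin_S0[OF x one(1) c])
    show "h (\<chi> k. one $ k * vpow c (col A k)) \<noteq> h one"
      using one(2) c_gt assms(2) by (simp add: h_def)
  qed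
  moreover have "S0 A \<beta> \<subseteq> S_eps A \<beta> \<epsilon>"
    unfolding S0_def using assms(2) by (simp add: S_eps_mono)
  ultimately show ?thesis
    by blast
qed

end
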